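(* Let $f:\mathbb{R}^d\to\mathbb{R}$ with $f^*:=\sup_\theta f(\theta)<\infty$ and let $\epsilon\in(0,1)$. Assume (i) $f$ is $L$-smooth; (ii) $f$ satisfies the non-uniform Łojasiewicz condition with $\xi=0$: $\|\nabla f(\theta)\|_2\ge C(\theta)|f^*-f(\theta)|$ for all $\theta$, for some $C:\mathbb{R}^d\to(0,\infty)$. Run $\theta_{t+1}=\theta_t+\eta_t\hat g(\theta_t)$, where (a) $\hat g(\theta)$ is a stochastic gradient with $\mathbb{E}[\hat g(\theta)]=\nabla f(\theta)$ and $\mathbb{E}\|\hat g(\theta)-\nabla f(\theta)\|_2^2\le\sigma^2$, and (b) $\eta_t=\eta_0\alpha^t$ with $\eta_0=1/L$, $\alpha=(\beta/T)^{1/T}$, $\beta\ge1$. Assume (iii) $\mu:=\Big[\mathbb{E}\big[\big(\inf_{t\ge1}[C(\theta_t)]^2\big)^{-1}\big]\Big]^{-1}>0$. Then, if $\mathbb{E}[f^*-f(\theta_t)]>\epsilon$ for all $t\in[1,T]$, $$\mathbb{E}[f^*-f(\theta_{T+1})]\le \mathbb{E}[f^*-f(\theta_1)]\,C_1\exp\Big(-\frac{\alpha\,\epsilon\,T}{\kappa\ln(T/\beta)}\Big)+\frac{C_1C_2}{2L}\frac{\ln^2(T/\beta)\,\sigma^2}{\epsilon^2 T},$$ where $\kappa:=2L/\mu$, $C_1:=\exp\big(\frac{2\beta}{\kappa\ln(T/\beta)}\big)$, $C_2:=\frac{4\kappa^2}{e^2\alpha^2}$. Otherwise $\min_{t\i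n[1,T]}\mathbb{E}[f^*-f(\theta_t)]\le\epsilon$.
   Context: $f$ is $L$-smooth means $|f(\theta)-f(\theta')-\langle\nabla f(\theta'),\theta-\theta'\rangle|\le\frac L2\|\theta-\theta'\|_2^2$ for all $\theta,\theta'$. Expectations are over the randomness of the stochastic gradients along the trajectory. *)

theory Defs
  imports "HOL-Probability.Probability"
begin

definition L_smooth :: "real \<Rightarrow> ('a::euclidean_space \<Rightarrow> real) \<Rightarrow> ('a \<Rightarrow> 'a) \<Rightarrow> bool" where
  "L_smooth L f grad \<longleftrightarrow>
     (\<forall>\<theta> \<theta>'. \<bar>f \<theta> - f \<theta>' - grad \<theta>' \<bullet> (\<theta> - \<theta>')\<bar> \<le> L / 2 * (norm (\<theta> - \<theta>'))\<^sup>2)"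

definition is_filtration :: "'b measure \<Rightarrow> (nat \<Rightarrow> 'b measure) \<Rightarrow> bool" where
  "is_filtration M F \<longleftrightarrow> (\<forall>t. subalgebra M (F t) \<and> sets (F t) \<subseteq> sets (F (Suc t)))"

end

theory Submission
  imports Defs
begin

text \<open>
  Write \<open>E\<^sub>t\<close> for the expected optimality gap \<open>E[f\<^sup>* - f(\<theta>\<^sub>t)]\<close>. By \<open>L\<close>-smoothness and
  unbiasedness, a step of size \<open>\<eta> \<le> 1/L\<close> gives
  \<open>E\<^sub>t\<^sub>+\<^sub>1 \<le> E\<^sub>t - \<eta>/2 E\<parallel>\<nabla>f(\<theta>\<^sub>t)\<parallel>\<^sup>2 + L\<eta>\<^sup>2\<sigma>\<^sup>2/2\<close>. The Lojasiewicz inequality gives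
  \<open>\<parallel>\<nabla>f(\<theta>\<^sub>t)\<parallel>\<^sup>2 \<ge> inf\<^sub>s C(\<theta>\<^sub>s)\<^sup>2 (f\<^sup>* - f(\<theta>\<^sub>t))\<^sup>2\<close>, and the Cauchy--Schwarz inequality turns
  this into \<open>E\<parallel>\<nabla>f(\<theta>\<^sub>t)\<parallel>\<^sup>2 \<ge> \<mu> E\<^sub>t\<^sup>2 \<ge> \<mu> \<epsilon> E\<^sub>t\<close> as long as \<open>E\<^sub>t > \<epsilon>\<close>. This yields the linear
  recursion \<open>E\<^sub>t\<^sub>+\<^sub>1 \<le> (1 - \<alpha>\<^sup>t\<epsilon>/\<kappa>) E\<^sub>t + \<alpha>\<^sup>2\<^sup>t\<sigma>\<^sup>2/(2L)\<close>. Unrolling it, the tail sums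
  \<open>\<Sum>\<^sub>s\<^sub>>\<^sub>t \<alpha>\<^sup>s\<close> of the geometric step sizes are bounded below using \<open>1 - \<alpha> \<le> ln(T/\<beta>)/T\<close>, and every
  noise term is bounded by \<open>y\<^sup>2 e\<^sup>-\<^sup>x\<^sup>y \<le> 4/(e x)\<^sup>2\<close>.
\<close>

section \<open>Smooth functions\<close>

lemma L_smooth_lower_bound:
  assumes "L_smooth L f grad"
  shows "f x + grad x \<bullet> (y - x) - L / 2 * (norm (y - x))\<^sup>2 \<le> f y"
proof -
  have "\<bar>f y - f x - grad x \<bullet> (y - x)\<bar> \<le> L / 2 * (norm (y - x))\<^sup>2"
    using assms unfolding L_smooth_def by blast
  then show ?thesis
    using abs_le_D2 by linarith
qed

lemma L_smooth_gradient_norm_bound: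
  assumes "bdd_above (range f)" and "0 < L" and "L_smooth L f grad"
  shows "(norm (grad x))\<^sup>2 \<le> 2 * L * (Sup (range f) - f x)"
proof -
  define y where "y = x + (1 / L) *\<^sub>R grad x"
  have "f x + (norm (grad x))\<^sup>2 / (2 * L) = f x + grad x \<bullet> (y - x) - L / 2 * (norm (y - x))\<^sup>2"
    using \<open>0 < L\<close> by (simp add: y_def dot_square_norm power_mult_distrib power2_eq_square)
  also have "\<dots> \<le> f y"
    using L_smooth_lower_bound[OF assms(3)] .
  also have "\<dots> \<le> Sup (range f)"
    using assms(1) by (simp add: cSUP_upper)
  finally show ?thesis
    using \<open>0 < L\<close> by (simp add: field_simps)
qed

(* Expanding the square norm of v around grad x makes every term integrable
   when v is a stochastic gradient with square-integrable noise. *)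
lemma L_smooth_gap_step_le:
  assumes "L_smooth L f grad"
  shows "c - f (x + \<eta> *\<^sub>R v)
    \<le> c - f x - \<eta> * (grad x \<bullet> v) + L / 2 * (\<eta>\<^sup>2 * ((norm (v - grad x))\<^sup>2 + 2 * (grad x \<bullet> v) - (norm (grad x))\<^sup>2))"
proof -
  have "(norm v)\<^sup>2 = (norm (v - grad x))\<^sup>2 + 2 * (grad x \<bullet> v) - (norm (grad x))\<^sup>2"
    by (simp add: power2_norm_eq_inner inner_diff_left inner_diff_right inner_commute)
  then have "(norm (\<eta> *\<^sub>R v))\<^sup>2 = \<eta>\<^sup>2 * ((norm (v - grad x))\<^sup>2 + 2 * (grad x \<bullet> v) - (norm (grad x))\<^sup>2)"
    by (simp add: power_mult_distrib)
  then show ?thesis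
    using L_smooth_lower_bound[OF assms, of x "x + \<eta> *\<^sub>R v"] by simp
qed

lemma L_smooth_gradient_borel_measurable:
  fixes f :: "'a::euclidean_space \<Rightarrow> real"
  assumes smooth: "L_smooth L f grad" and f: "f \<in> borel_measurable borel"
  shows "grad \<in> borel_measurable borel"
proof (subst borel_measurable_euclidean_space, intro ballI)
  fix b :: 'a assume b: "b \<in> Basis"
  define u where "u n x = (f (x + (1 / real (Suc n)) *\<^sub>R b) - f x) * real (Suc n)" for n x
  show "(\<lambda>x. grad x \<bullet> b) \<in> borel_measurable borel"
  proof (rule borel_measurable_LIMSEQ_real[where u = u])
    show "u n \<in> borel_measurable borel" for n
      unfolding u_def using f by measurable
  next
    fix x :: 'a
    have quotient_error: "norm (u n x - grad x \<bullet> b) \<le> \<bar>L\<bar> / 2 * inverse (real (Suc n))" for n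
    proof -
      define h where "h = 1 / real (Suc n)"
      have "0 < h"
        by (simp add: h_def)
      have "\<bar>f (x + h *\<^sub>R b) - f x - grad x \<bullet> ((x + h *\<^sub>R b) - x)\<bar> \<le> L / 2 * (norm ((x + h *\<^sub>R b) - x))\<^sup>2"
        using smooth unfolding L_smooth_def by blast
      then have "\<bar>f (x + h *\<^sub>R b) - f x - h * (grad x \<bullet> b)\<bar> \<le> L / 2 * h\<^sup>2"
        using b \<open>0 < h\<close> by simp
      then have "\<bar>f (x + h *\<^sub>R b) - f x - h * (grad x \<bullet> b)\<bar> * real (Suc n) \<le> L / 2 * h\<^sup>2 * real (Suc n)"
        by (intro mult_right_mono) auto
      moreover have "\<bar>f (x + h *\<^sub>R b) - f x - h * (grad x \<bullet> b)\<bar> * real (Suc n) = norm (u n x - grad x \<bullet> b)"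
        unfolding u_def h_def by (simp add: abs_mult[symmetric] field_simps del: of_nat_Suc)
      moreover have "L / 2 * h\<^sup>2 * real (Suc n) \<le> \<bar>L\<bar> / 2 * inverse (real (Suc n))"
        unfolding h_def by (simp add: power2_eq_square field_simps del: of_nat_Suc)
      ultimately show ?thesis
        by linarith
    qed
    have "(\<lambda>n. u n x - grad x \<bullet> b) \<longlonglongrightarrow> 0"
    proof (rule Lim_null_comparison[OF always_eventually])
      show "\<forall>n. norm (u n x - grad x \<bullet> b) \<le> \<bar>L\<bar> / 2 * inverse (real (Suc n))"
        using quotient_error by blast
      show "(\<lambda>n. \<bar>L\<bar> / 2 * inverse (real (Suc n))) \<longlonglongrightarrow> 0"
        using tendsto_mult_right_zero[OF LIMSEQ_inverse_real_of_nat] by simp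
    qed
    then show "(\<lambda>n. u n x) \<longlonglongrightarrow> grad x \<bullet> b"
      by (rule LIM_zero_cancel)
  qed
qed

section \<open>Square-integrable random vectors and one stochastic gradient step\<close>

lemma integrable_bounded_by_norm_mult:
  fixes u v :: "'b \<Rightarrow> 'a::real_normed_vector" and h :: "'b \<Rightarrow> real"
  assumes "integrable M (\<lambda>\<omega>. (norm (u \<omega>))\<^sup>2)" and "integrable M (\<lambda>\<omega>. (norm (v \<omega>))\<^sup>2)"
    and "h \<in> borel_measurable M" and "\<And>\<omega>. \<bar>h \<omega>\<bar> \<le> norm (u \<omega>) * norm (v \<omega>)"
  shows "integrable M h"
proof (rule Bochner_Integration.integrable_bound[of M "\<lambda>\<omega>. (norm (u \<omega>))\<^sup>2 + (norm (v \<omega>))\<^sup>2"])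
  show "integrable M (\<lambda>\<omega>. (norm (u \<omega>))\<^sup>2 + (norm (v \<omega>))\<^sup>2)"
    using assms(1,2) by simp
  show "AE \<omega> in M. norm (h \<omega>) \<le> norm ((norm (u \<omega>))\<^sup>2 + (norm (v \<omega>))\<^sup>2)"
  proof (rule AE_I2)
    fix \<omega>
    have "norm (u \<omega>) * norm (v \<omega>) \<le> (norm (u \<omega>))\<^sup>2 + (norm (v \<omega>))\<^sup>2"
      using sum_squares_bound[of "norm (u \<omega>)" "norm (v \<omega>)"]
        mult_nonneg_nonneg[OF norm_ge_zero norm_ge_zero, of "u \<omega>" "v \<omega>"] by linarith
    then show "norm (h \<omega>) \<le> norm ((norm (u \<omega>))\<^sup>2 + (norm (v \<omega>))\<^sup>2)"
      using assms(4)[of \<omega>] by simp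
  qed
qed (fact assms(3))

lemma integrable_norm_sq_of_diff:
  fixes u v :: "'b \<Rightarrow> 'a::real_normed_vector"
  assumes "integrable M (\<lambda>\<omega>. (norm (u \<omega>))\<^sup>2)" and "integrable M (\<lambda>\<omega>. (norm (v \<omega> - u \<omega>))\<^sup>2)"
    and "v \<in> borel_measurable M"
  shows "integrable M (\<lambda>\<omega>. (norm (v \<omega>))\<^sup>2)"
proof (rule Bochner_Integration.integrable_bound[of M "\<lambda>\<omega>. 2 * (norm (u \<omega>))\<^sup>2 + 2 * (norm (v \<omega> - u \<omega>))\<^sup>2"])
  show "integrable M (\<lambda>\<omega>. 2 * (norm (u \<omega>))\<^sup>2 + 2 * (norm (v \<omega> - u \<omega>))\<^sup>2)"
    using assms(1,2) by simp
  show "(\<lambda>\<omega>. (norm (v \<omega>))\<^sup>2) \<in> borel_measurable M"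
    using assms(3) by measurable
  show "AE \<omega> in M. norm ((norm (v \<omega>))\<^sup>2) \<le> norm (2 * (norm (u \<omega>))\<^sup>2 + 2 * (norm (v \<omega> - u \<omega>))\<^sup>2)"
  proof (rule AE_I2)
    fix \<omega>
    have "norm (v \<omega>) \<le> norm (u \<omega>) + norm (v \<omega> - u \<omega>)"
      using norm_triangle_ineq[of "u \<omega>" "v \<omega> - u \<omega>"] by simp
    then have "(norm (v \<omega>))\<^sup>2 \<le> (norm (u \<omega>) + norm (v \<omega> - u \<omega>))\<^sup>2"
      by (intro power_mono) auto
    also have "\<dots> \<le> 2 * (norm (u \<omega>))\<^sup>2 + 2 * (norm (v \<omega> - u \<omega>))\<^sup>2"
      using sum_squares_bound[of "norm (u \<omega>)" "norm (v \<omega> - u \<omega>)"] unfolding power2_sum by linarith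
    finally show "norm ((norm (v \<omega>))\<^sup>2) \<le> norm (2 * (norm (u \<omega>))\<^sup>2 + 2 * (norm (v \<omega> - u \<omega>))\<^sup>2)"
      by simp
  qed
qed

lemma integrable_gradient_norm_sq:
  fixes f :: "'a::euclidean_space \<Rightarrow> real" and x :: "'b \<Rightarrow> 'a"
  assumes "bdd_above (range f)" and "0 < L" and "L_smooth L f grad" and "f \<in> borel_measurable borel"
    and "x \<in> borel_measurable M" and "integrable M (\<lambda>\<omega>. Sup (range f) - f (x \<omega>))"
  shows "integrable M (\<lambda>\<omega>. (norm (grad (x \<omega>)))\<^sup>2)"
proof (rule Bochner_Integration.integrable_bound[of M "\<lambda>\<omega>. 2 * L * (Sup (range f) - f (x \<omega>))"])
  show "integrable M (\<lambda>\<omega>. 2 * L * (Sup (range f) - f (x \<omega>)))"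
    using assms(6) by simp
  show "(\<lambda>\<omega>. (norm (grad (x \<omega>)))\<^sup>2) \<in> borel_measurable M"
    using L_smooth_gradient_borel_measurable[OF assms(3,4)] assms(5) by measurable
  show "AE \<omega> in M. norm ((norm (grad (x \<omega>)))\<^sup>2) \<le> norm (2 * L * (Sup (range f) - f (x \<omega>)))"
  proof (rule AE_I2)
    fix \<omega>
    have "f (x \<omega>) \<le> Sup (range f)"
      using assms(1) by (simp add: cSUP_upper)
    then show "norm ((norm (grad (x \<omega>)))\<^sup>2) \<le> norm (2 * L * (Sup (range f) - f (x \<omega>)))"
      using L_smooth_gradient_norm_bound[OF assms(1-3)] \<open>0 < L\<close> by simp
  qed
qed

lemma (in sigma_finite_subalgebra) integrable_integral_inner_if_unbiased:
  fixes u v :: "'a \<Rightarrow> 'c::euclidean_space"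
  assumes u_meas: "u \<in> borel_measurable F" and v_meas: "v \<in> borel_measurable M"
    and u_sq: "integrable M (\<lambda>\<omega>. (norm (u \<omega>))\<^sup>2)" and noise_sq: "integrable M (\<lambda>\<omega>. (norm (v \<omega> - u \<omega>))\<^sup>2)"
    and unbiased: "\<And>b. b \<in> Basis \<Longrightarrow> AE \<omega> in M. real_cond_exp M F (\<lambda>\<omega>. v \<omega> \<bullet> b) \<omega> = u \<omega> \<bullet> b"
  shows "integrable M (\<lambda>\<omega>. u \<omega> \<bullet> v \<omega>)" and "(\<integral>\<omega>. u \<omega> \<bullet> v \<omega> \<partial>M) = (\<integral>\<omega>. (norm (u \<omega>))\<^sup>2 \<partial>M)"
proof -
  have [measurable]: "u \<in> borel_measurable M"
    by (rule measurable_from_subalg[OF subalg u_meas])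
  have v_sq: "integrable M (\<lambda>\<omega>. (norm (v \<omega>))\<^sup>2)"
    by (rule integrable_norm_sq_of_diff[OF u_sq noise_sq v_meas])
  show "integrable M (\<lambda>\<omega>. u \<omega> \<bullet> v \<omega>)"
    using u_sq v_sq by (rule integrable_bounded_by_norm_mult) (use v_meas in measurable, simp add: Cauchy_Schwarz_ineq2)
  have integrable: "integrable M (\<lambda>\<omega>. (u \<omega> \<bullet> b) * (w \<omega> \<bullet> b))"
    if "b \<in> Basis" and "integrable M (\<lambda>\<omega>. (norm (w \<omega>))\<^sup>2)" and "w \<in> borel_measurable M" for w :: "'a \<Rightarrow> 'c" and b
    using u_sq that(2)
  proof (rule integrable_bounded_by_norm_mult)
    show "(\<lambda>\<omega>. (u \<omega> \<bullet> b) * (w \<omega> \<bullet> b)) \<in> borel_measurable M"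
      using that(3) by measurable
    show "\<bar>(u \<omega> \<bullet> b) * (w \<omega> \<bullet> b)\<bar> \<le> norm (u \<omega>) * norm (w \<omega>)" for \<omega>
      unfolding abs_mult using Basis_le_norm[OF that(1)] by (intro mult_mono) auto
  qed
  have component: "(\<integral>\<omega>. (u \<omega> \<bullet> b) * (v \<omega> \<bullet> b) \<partial>M) = (\<integral>\<omega>. (u \<omega> \<bullet> b) * (u \<omega> \<bullet> b) \<partial>M)"
    if b: "b \<in> Basis" for b
  proof -
    have [measurable]: "(\<lambda>\<omega>. u \<omega> \<bullet> b) \<in> borel_measurable F" "(\<lambda>\<omega>. v \<omega> \<bullet> b) \<in> borel_measurable M"
      using u_meas v_meas by measurable
    have "(\<integral>\<omega>. (u \<omega> \<bullet> b) * (v \<omega> \<bullet> b) \<partial>M)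
        = (\<integral>\<omega>. (u \<omega> \<bullet> b) * real_cond_exp M F (\<lambda>\<omega>. v \<omega> \<bullet> b) \<omega> \<partial>M)"
      by (rule real_cond_exp_intg(2)[symmetric]) (rule integrable[OF b v_sq v_meas], measurable)
    also have "\<dots> = (\<integral>\<omega>. (u \<omega> \<bullet> b) * (u \<omega> \<bullet> b) \<partial>M)"
    proof (rule integral_cong_AE)
      show "AE \<omega> in M. (u \<omega> \<bullet> b) * real_cond_exp M F (\<lambda>\<omega>. v \<omega> \<bullet> b) \<omega> = (u \<omega> \<bullet> b) * (u \<omega> \<bullet> b)"
        using unbiased[OF b] by (rule eventually_mono) simp
    qed measurable
    finally show ?thesis .
  qed
  have inner: "(\<lambda>\<omega>. w \<omega> \<bullet> z \<omega>) = (\<lambda>\<omega>. \<Sum>b\<in>Basis. (w \<omega> \<bullet> b) * (z \<omega> \<bullet> b))"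
    for w z :: "'a \<Rightarrow> 'c"
    by (rule ext, rule euclidean_inner)
  have "(\<integral>\<omega>. u \<omega> \<bullet> v \<omega> \<partial>M) = (\<Sum>b\<in>Basis. \<integral>\<omega>. (u \<omega> \<bullet> b) * (v \<omega> \<bullet> b) \<partial>M)"
    unfolding inner[of u v] using integrable[OF _ v_sq v_meas] by (intro Bochner_Integration.integral_sum) auto
  also have "\<dots> = (\<Sum>b\<in>Basis. \<integral>\<omega>. (u \<omega> \<bullet> b) * (u \<omega> \<bullet> b) \<partial>M)"
    using component by simp
  also have "\<dots> = (\<integral>\<omega>. (norm (u \<omega>))\<^sup>2 \<partial>M)"
    unfolding power2_norm_eq_inner inner[of u u]
    using integrable[OF _ u_sq] by (intro Bochner_Integration.integral_sum[symmetric]) auto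
  finally show "(\<integral>\<omega>. u \<omega> \<bullet> v \<omega> \<partial>M) = (\<integral>\<omega>. (norm (u \<omega>))\<^sup>2 \<partial>M)" .
qed

lemma (in sigma_finite_subalgebra) integral_le_if_real_cond_exp_le:
  assumes "prob_space M" and "integrable M h" and "AE \<omega> in M. real_cond_exp M F h \<omega> \<le> c"
  shows "(\<integral>\<omega>. h \<omega> \<partial>M) \<le> c"
proof -
  interpret prob_space M by fact
  have "(\<integral>\<omega>. h \<omega> \<partial>M) = (\<integral>\<omega>. real_cond_exp M F h \<omega> \<partial>M)"
    using real_cond_exp_int(2)[OF assms(2)] by simp
  also have "\<dots> \<le> (\<integral>\<omega>. c \<partial>M)"
    using real_cond_exp_int(1)[OF assms(2)] assms(3) by (intro integral_mono_AE) auto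
  finally show ?thesis
    by (simp add: prob_space)
qed

lemma (in sigma_finite_subalgebra) expected_gap_descent:
  fixes f :: "'c::euclidean_space \<Rightarrow> real" and x G :: "'a \<Rightarrow> 'c"
  defines "fstar \<equiv> Sup (range f)"
  assumes "prob_space M"
    and bdd: "bdd_above (range f)" and f_borel: "f \<in> borel_measurable borel"
    and "0 < L" and smooth: "L_smooth L f grad"
    and x_meas: "x \<in> borel_measurable F" and G_meas: "G \<in> borel_measurable M"
    and unbiased: "\<And>b. b \<in> Basis \<Longrightarrow> AE \<omega> in M. real_cond_exp M F (\<lambda>\<omega>. G \<omega> \<bullet> b) \<omega> = grad (x \<omega>) \<bullet> b"
    and noise: "integrable M (\<lambda>\<omega>. (norm (G \<omega> - grad (x \<omega>)))\<^sup>2)"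
    and variance: "AE \<omega> in M. real_cond_exp M F (\<lambda>\<omega>. (norm (G \<omega> - grad (x \<omega>)))\<^sup>2) \<omega> \<le> \<sigma>\<^sup>2"
    and "0 < \<eta>" and "L * \<eta> \<le> 1"
    and gap: "integrable M (\<lambda>\<omega>. fstar - f (x \<omega>))"
  shows "integrable M (\<lambda>\<omega>. fstar - f (x \<omega> + \<eta> *\<^sub>R G \<omega>))"
    and "(\<integral>\<omega>. fstar - f (x \<omega> + \<eta> *\<^sub>R G \<omega>) \<partial>M)
      \<le> (\<integral>\<omega>. fstar - f (x \<omega>) \<partial>M) - \<eta> / 2 * (\<integral>\<omega>. (norm (grad (x \<omega>)))\<^sup>2 \<partial>M) + L * \<eta>\<^sup>2 / 2 * \<sigma>\<^sup>2"
proof -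
  note f_borel[measurable] x_meas[measurable] G_meas[measurable]
  have [measurable]: "grad \<in> borel_measurable borel" "x \<in> borel_measurable M"
    using L_smooth_gradient_borel_measurable[OF smooth f_borel] measurable_from_subalg[OF subalg x_meas] .
  define A where "A = (\<integral>\<omega>. (norm (grad (x \<omega>)))\<^sup>2 \<partial>M)"
  define N where "N = (\<integral>\<omega>. (norm (G \<omega> - grad (x \<omega>)))\<^sup>2 \<partial>M)"
  have grad_sq: "integrable M (\<lambda>\<omega>. (norm (grad (x \<omega>)))\<^sup>2)"
    using gap unfolding fstar_def by (intro integrable_gradient_norm_sq[OF bdd \<open>0 < L\<close> smooth f_borel]) auto
  have inner: "integrable M (\<lambda>\<omega>. grad (x \<omega>) \<bullet> G \<omega>)"
    and inner_eq: "(\<integral>\<omega>. grad (x \<omega>) \<bullet> G \<omega> \<partial>M) = A"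
    unfolding A_def using grad_sq noise unbiased by (intro integrable_integral_inner_if_unbiased; measurable)+
  have "N \<le> \<sigma>\<^sup>2"
    unfolding N_def using \<open>prob_space M\<close> noise variance by (rule integral_le_if_real_cond_exp_le)
  have "0 \<le> A"
    unfolding A_def by simp
  have gap_nonneg: "0 \<le> fstar - f y" for y
    using bdd by (simp add: fstar_def cSUP_upper)
  define R where "R \<omega> = (fstar - f (x \<omega>)) - \<eta> * (grad (x \<omega>) \<bullet> G \<omega>)
    + L / 2 * (\<eta>\<^sup>2 * ((norm (G \<omega> - grad (x \<omega>)))\<^sup>2 + 2 * (grad (x \<omega>) \<bullet> G \<omega>) - (norm (grad (x \<omega>)))\<^sup>2))" for \<omega>
  have R: "integrable M R"
    unfolding R_def using gap inner noise grad_sq by simp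
  have le_R: "fstar - f (x \<omega> + \<eta> *\<^sub>R G \<omega>) \<le> R \<omega>" for \<omega>
    unfolding R_def by (rule L_smooth_gap_step_le[OF smooth])
  show next_gap: "integrable M (\<lambda>\<omega>. fstar - f (x \<omega> + \<eta> *\<^sub>R G \<omega>))"
  proof (rule Bochner_Integration.integrable_bound[OF R])
    show "AE \<omega> in M. norm (fstar - f (x \<omega> + \<eta> *\<^sub>R G \<omega>)) \<le> norm (R \<omega>)"
      using gap_nonneg le_R by (intro AE_I2) (metis abs_of_nonneg order_trans real_norm_def abs_ge_self)
  qed measurable
  have "(\<integral>\<omega>. fstar - f (x \<omega> + \<eta> *\<^sub>R G \<omega>) \<partial>M) \<le> (\<integral>\<omega>. R \<omega> \<partial>M)"
    using next_gap R le_R by (rule integral_mono)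
  also have "(\<integral>\<omega>. R \<omega> \<partial>M) = (\<integral>\<omega>. fstar - f (x \<omega>) \<partial>M) - \<eta> * (\<integral>\<omega>. grad (x \<omega>) \<bullet> G \<omega> \<partial>M)
      + L / 2 * (\<eta>\<^sup>2 * (N + 2 * (\<integral>\<omega>. grad (x \<omega>) \<bullet> G \<omega> \<partial>M) - A))"
    unfolding R_def N_def A_def using gap inner noise grad_sq by simp
  also have "\<dots> = (\<integral>\<omega>. fstar - f (x \<omega>) \<partial>M) - \<eta> * A + L / 2 * \<eta>\<^sup>2 * (N + A)"
    unfolding inner_eq by (simp add: algebra_simps)
  also have "\<dots> \<le> (\<integral>\<omega>. fstar - f (x \<omega>) \<partial>M) - \<eta> / 2 * A + L * \<eta>\<^sup>2 / 2 * \<sigma>\<^sup>2"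
  proof -
    have "L / 2 * \<eta>\<^sup>2 * A \<le> \<eta> / 2 * A"
      using \<open>L * \<eta> \<le> 1\<close> \<open>0 < \<eta>\<close> \<open>0 \<le> A\<close> by (intro mult_right_mono) (auto simp: power2_eq_square)
    moreover have "L / 2 * \<eta>\<^sup>2 * N \<le> L / 2 * \<eta>\<^sup>2 * \<sigma>\<^sup>2"
      using \<open>N \<le> \<sigma>\<^sup>2\<close> \<open>0 < L\<close> by (intro mult_left_mono) auto
    ultimately show ?thesis
      by (simp add: algebra_simps)
  qed
  finally show "(\<integral>\<omega>. fstar - f (x \<omega> + \<eta> *\<^sub>R G \<omega>) \<partial>M)
      \<le> (\<integral>\<omega>. fstar - f (x \<omega>) \<partial>M) - \<eta> / 2 * A + L * \<eta>\<^sup>2 / 2 * \<sigma>\<^sup>2" .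
qed

(* Cauchy-Schwarz: integrate 2 c d \<le> w d\<^sup>2 + c\<^sup>2 / w with c = (\<integral>d) / (\<integral>1/w). *)
lemma integral_square_div_le_weighted:
  fixes a d w :: "'b \<Rightarrow> real"
  assumes a: "integrable M a" and d: "integrable M d" and w: "integrable M (\<lambda>\<omega>. 1 / w \<omega>)"
    and pointwise: "AE \<omega> in M. 0 < w \<omega> \<and> w \<omega> * (d \<omega>)\<^sup>2 \<le> a \<omega>"
    and pos: "0 < (\<integral>\<omega>. 1 / w \<omega> \<partial>M)"
  shows "(\<integral>\<omega>. d \<omega> \<partial>M)\<^sup>2 / (\<integral>\<omega>. 1 / w \<omega> \<partial>M) \<le> (\<integral>\<omega>. a \<omega> \<partial>M)"
proof -
  define K where "K = (\<integral>\<omega>. 1 / w \<omega> \<partial>M)"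
  define c where "c = (\<integral>\<omega>. d \<omega> \<partial>M) / K"
  have "AE \<omega> in M. 2 * c * d \<omega> - c\<^sup>2 * (1 / w \<omega>) \<le> a \<omega>"
    using pointwise
  proof (rule eventually_mono)
    fix \<omega> assume \<omega>: "0 < w \<omega> \<and> w \<omega> * (d \<omega>)\<^sup>2 \<le> a \<omega>"
    have "0 \<le> (w \<omega> * d \<omega> - c)\<^sup>2 / w \<omega>"
      using \<omega> by simp
    also have "\<dots> = w \<omega> * (d \<omega>)\<^sup>2 - (2 * c * d \<omega> - c\<^sup>2 * (1 / w \<omega>))"
      using \<omega> by (simp add: power2_eq_square field_simps)
    finally show "2 * c * d \<omega> - c\<^sup>2 * (1 / w \<omega>) \<le> a \<omega>"
      using \<omega> by linarith
  qed
  moreover have "integrable M (\<lambda>\<omega>. 2 * c * d \<omega> - c\<^sup>2 * (1 / w \<omega>))"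
    using d w by (intro Bochner_Integration.integrable_diff integrable_mult_right)
  ultimately have "(\<integral>\<omega>. 2 * c * d \<omega> - c\<^sup>2 * (1 / w \<omega>) \<partial>M) \<le> (\<integral>\<omega>. a \<omega> \<partial>M)"
    using a by (intro integral_mono_AE)
  moreover have "(\<integral>\<omega>. 2 * c * d \<omega> - c\<^sup>2 * (1 / w \<omega>) \<partial>M) = 2 * c * (\<integral>\<omega>. d \<omega> \<partial>M) - c\<^sup>2 * K"
    unfolding K_def using d w
    by (simp only: Bochner_Integration.integral_diff integrable_mult_right integral_mult_right_zero)
  moreover have "2 * c * (\<integral>\<omega>. d \<omega> \<partial>M) - c\<^sup>2 * K = (\<integral>\<omega>. d \<omega> \<partial>M)\<^sup>2 / K"
    using pos unfolding c_def K_def by (simp add: power2_eq_square field_simps)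
  ultimately show ?thesis
    by (simp add: K_def)
qed

(* This also holds for x = 0: inverse 0 = \<infinity> and enn2real \<infinity> = 0 = 1 / 0. *)
lemma enn2real_inverse_ennreal: "0 \<le> x \<Longrightarrow> enn2real (inverse (ennreal x)) = 1 / x"
  by (cases "x = 0") (auto simp: inverse_ennreal inverse_eq_divide)

section \<open>Linear recursions with geometric step sizes\<close>

lemma linear_recursion_exp_bound:
  fixes E q c :: "nat \<Rightarrow> real"
  assumes nonneg: "\<And>t. 1 \<le> t \<Longrightarrow> t \<le> T \<Longrightarrow> 0 \<le> E t"
    and rec: "\<And>t. 1 \<le> t \<Longrightarrow> t \<le> T \<Longrightarrow> E (t + 1) \<le> (1 - q t) * E t + c t"
    and "k \<le> T"
  shows "E (k + 1) \<le> exp (- (\<Sum>s=1..k. q s)) * E 1 + (\<Sum>t=1..k. c t * exp (- (\<Sum>s=t+1..k. q s)))"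
  using \<open>k \<le> T\<close>
proof (induction k)
  case 0
  then show ?case by simp
next
  case (Suc k)
  let ?Q = "\<lambda>t k. exp (- (\<Sum>s=t..k. q s))"
  have "E (Suc k + 1) \<le> (1 - q (k + 1)) * E (k + 1) + c (k + 1)"
    using rec[of "k + 1"] Suc.prems by simp
  also have "\<dots> \<le> exp (- q (k + 1)) * E (k + 1) + c (k + 1)"
    using nonneg[of "k + 1"] Suc.prems exp_ge_add_one_self[of "- q (k + 1)"]
    by (intro add_right_mono mult_right_mono) auto
  also have "\<dots> \<le> exp (- q (k + 1)) * (?Q 1 k * E 1 + (\<Sum>t=1..k. c t * ?Q (t + 1) k)) + c (k + 1)"
    using Suc by (intro add_right_mono mult_left_mono) auto
  also have "\<dots> = ?Q 1 (Suc k) * E 1 + (\<Sum>t=1..Suc k. c t * ?Q (t + 1) (Suc k))"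
    by (simp add: sum_distrib_left exp_add[symmetric] algebra_simps)
  finally show ?case .
qed

lemma square_mul_exp_neg_le:
  fixes x y :: real
  assumes "0 < x" and "0 \<le> y"
  shows "y\<^sup>2 * exp (- (x * y)) \<le> 4 / ((exp 1)\<^sup>2 * x\<^sup>2)"
proof -
  define z where "z = x * y / 2"
  have "z \<le> exp (z - 1)"
    using exp_ge_add_one_self[of "z - 1"] by simp
  then have "z * exp (- z) \<le> exp (- 1)"
    by (simp add: exp_diff exp_minus field_simps)
  then have "(z * exp (- z))\<^sup>2 \<le> (exp (- 1))\<^sup>2"
    using assms by (intro power_mono) (auto simp: z_def)
  have "y\<^sup>2 * exp (- (x * y)) = 4 / x\<^sup>2 * (z * exp (- z))\<^sup>2"
    using assms by (simp add: z_def power_mult_distrib exp_minus power2_eq_square exp_add[symmetric] field_simps)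
  also have "\<dots> \<le> 4 / x\<^sup>2 * (exp (- 1))\<^sup>2"
    using \<open>(z * exp (- z))\<^sup>2 \<le> (exp (- 1))\<^sup>2\<close> by (rule mult_left_mono) simp
  also have "\<dots> = 4 / ((exp 1)\<^sup>2 * x\<^sup>2)"
    by (simp add: exp_minus field_simps)
  finally show ?thesis .
qed

lemma geometric_tail_sum_lower_bound:
  fixes \<alpha> \<rho> :: real
  assumes "0 \<le> \<alpha>" and "\<alpha> < 1" and "1 - \<alpha> \<le> \<rho>" and "t \<le> T"
  shows "(\<alpha> ^ (t + 1) - \<alpha> ^ (T + 1)) / \<rho> \<le> (\<Sum>s=t+1..T. \<alpha> ^ s)"
proof -
  have "0 \<le> \<alpha> ^ (t + 1) - \<alpha> ^ (T + 1)"
    using assms power_decreasing[of "t + 1" "T + 1" \<alpha>] by simp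
  then have "(\<alpha> ^ (t + 1) - \<alpha> ^ (T + 1)) / \<rho> \<le> (\<alpha> ^ (t + 1) - \<alpha> ^ (T + 1)) / (1 - \<alpha>)"
    using assms by (intro divide_left_mono) auto
  also have "\<dots> = (\<Sum>s=t+1..T. \<alpha> ^ s)"
    using assms sum_gp_multiplied[of "t + 1" T \<alpha>]
    by (cases "t < T") (auto simp: not_less field_simps)
  finally show ?thesis .
qed

lemma stepsize_decay_factor:
  fixes \<beta> :: real and T :: nat
  defines "\<alpha> \<equiv> (\<beta> / real T) powr (1 / real T)"
  assumes "1 \<le> \<beta>" and "\<beta> < real T"
  shows "0 < \<alpha>" and "\<alpha> < 1" and "\<alpha> ^ T = \<beta> / real T"
    and "1 - \<alpha> \<le> ln (real T / \<beta>) / real T"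
proof -
  have T: "0 < real T" and ratio: "0 < \<beta> / real T" "\<beta> / real T < 1"
    using assms by auto
  show "0 < \<alpha>"
    using ratio T \<open>1 \<le> \<beta>\<close> by (simp add: \<alpha>_def)
  show "\<alpha> < 1"
    unfolding \<alpha>_def using powr_less_mono2[of "1 / real T" "\<beta> / real T" 1] ratio T by simp
  show "\<alpha> ^ T = \<beta> / real T"
    using ratio T \<open>1 \<le> \<beta>\<close> by (simp add: \<alpha>_def powr_realpow[symmetric] powr_powr)
  have "ln \<alpha> = - ln (real T / \<beta>) / real T"
    unfolding \<alpha>_def using ratio T \<open>1 \<le> \<beta>\<close> by (simp add: ln_powr ln_div)
  then show "1 - \<alpha> \<le> ln (real T / \<beta>) / real T"
    using ln_le_minus_one[OF \<open>0 < \<alpha>\<close>] by simp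
qed

lemma stepsize_exp_tail_le:
  fixes \<beta> \<epsilon> \<kappa> :: real and T :: nat
  defines "\<alpha> \<equiv> (\<beta> / real T) powr (1 / real T)" and "l \<equiv> ln (real T / \<beta>)"
  assumes "1 \<le> \<beta>" and "\<beta> < real T" and "0 < \<epsilon>" and "\<epsilon> < 1" and "0 < \<kappa>" and "t \<le> T"
  shows "exp (- (\<Sum>s=t+1..T. \<alpha> ^ s * \<epsilon> / \<kappa>))
    \<le> exp (2 * \<beta> / (\<kappa> * l)) * exp (- (\<alpha> * \<epsilon> * real T / (\<kappa> * l) * \<alpha> ^ t))"
proof -
  note \<alpha> = stepsize_decay_factor[OF assms(3,4), folded \<alpha>_def l_def]
  have T: "0 < real T" and l: "0 < l"
    using assms by (auto simp: l_def)
  have "\<alpha> * \<epsilon> * \<beta> \<le> 2 * \<beta>"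
    using \<alpha>(1,2) assms(3-6) mult_strict_mono[of \<alpha> 1 \<epsilon> 1] by (simp add: mult_le_cancel_right1)
  then have "\<alpha> * \<epsilon> * real T / (\<kappa> * l) * \<alpha> ^ t - 2 * \<beta> / (\<kappa> * l)
      \<le> \<alpha> * \<epsilon> * real T / (\<kappa> * l) * \<alpha> ^ t - \<alpha> * \<epsilon> * \<beta> / (\<kappa> * l)"
    using l \<open>0 < \<kappa>\<close> by (simp add: divide_right_mono)
  also have "\<dots> = \<epsilon> / \<kappa> * ((\<alpha> ^ (t + 1) - \<alpha> ^ (T + 1)) / (l / real T))"
    using \<alpha>(3) T l \<open>0 < \<kappa>\<close> by (simp add: field_simps)
  also have "\<dots> \<le> \<epsilon> / \<kappa> * (\<Sum>s=t+1..T. \<alpha> ^ s)"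
    using \<alpha> assms(5-8) by (intro mult_left_mono geometric_tail_sum_lower_bound) auto
  also have "\<dots> = (\<Sum>s=t+1..T. \<alpha> ^ s * \<epsilon> / \<kappa>)"
    by (simp add: sum_distrib_left field_simps)
  finally show ?thesis
    by (simp add: exp_add[symmetric])
qed

lemma exponential_stepsize_recursion_bound:
  fixes E :: "nat \<Rightarrow> real" and \<beta> \<epsilon> \<kappa> L \<sigma> :: real and T :: nat
  defines "\<alpha> \<equiv> (\<beta> / real T) powr (1 / real T)" and "l \<equiv> ln (real T / \<beta>)"
    and "C1 \<equiv> exp (2 * \<beta> / (\<kappa> * ln (real T / \<beta>)))"
  assumes "1 \<le> \<beta>" and "\<beta> < real T" and "0 < \<epsilon>" and "\<epsilon> < 1" and "0 < \<kappa>" and "0 < L"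
    and nonneg: "\<And>t. 1 \<le> t \<Longrightarrow> t \<le> T \<Longrightarrow> 0 \<le> E t"
    and rec: "\<And>t. 1 \<le> t \<Longrightarrow> t \<le> T \<Longrightarrow>
      E (t + 1) \<le> (1 - \<alpha> ^ t * \<epsilon> / \<kappa>) * E t + \<alpha> ^ (2 * t) * \<sigma>\<^sup>2 / (2 * L)"
  shows "E (T + 1) \<le> E 1 * C1 * exp (- (\<alpha> * \<epsilon> * real T / (\<kappa> * l)))
    + C1 * (4 * \<kappa>\<^sup>2 / ((exp 1)\<^sup>2 * \<alpha>\<^sup>2)) / (2 * L) * (l\<^sup>2 * \<sigma>\<^sup>2 / (\<epsilon>\<^sup>2 * real T))"
proof -
  define x where "x = \<alpha> * \<epsilon> * real T / (\<kappa> * l)"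
  define q where "q s = \<alpha> ^ s * \<epsilon> / \<kappa>" for s
  define c where "c t = \<alpha> ^ (2 * t) * \<sigma>\<^sup>2 / (2 * L)" for t
  note \<alpha> = stepsize_decay_factor[OF assms(4,5), folded \<alpha>_def]
  note tail = stepsize_exp_tail_le[OF assms(4-8), folded \<alpha>_def l_def C1_def]
  have T: "0 < real T" and l: "0 < l" and x: "0 < x"
    using \<alpha> assms(4-8) by (auto simp: l_def x_def)
  have "exp (- (\<Sum>s=1..T. q s)) \<le> C1 * exp (- x)"
    using tail[of 0] by (simp add: q_def x_def)
  moreover have "0 \<le> E 1"
    using nonneg[of 1] T by simp
  ultimately have initial: "exp (- (\<Sum>s=1..T. q s)) * E 1 \<le> E 1 * C1 * exp (- x)"
    by (metis mult_right_mono mult.commute mult.assoc)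
  have "(\<Sum>t=1..T. c t * exp (- (\<Sum>s=t+1..T. q s))) \<le> (\<Sum>t=1..T. \<sigma>\<^sup>2 / (2 * L) * C1 * (4 / ((exp 1)\<^sup>2 * x\<^sup>2)))"
  proof (rule sum_mono)
    fix t assume "t \<in> {1..T}"
    have "c t * exp (- (\<Sum>s=t+1..T. q s)) \<le> c t * (C1 * exp (- (x * \<alpha> ^ t)))"
      using tail[of t] \<open>t \<in> {1..T}\<close> \<open>0 < L\<close> by (intro mult_left_mono) (auto simp: c_def q_def x_def)
    also have "\<dots> = \<sigma>\<^sup>2 / (2 * L) * C1 * ((\<alpha> ^ t)\<^sup>2 * exp (- (x * \<alpha> ^ t)))"
      by (simp add: c_def power_mult[symmetric] mult.commute)
    also have "\<dots> \<le> \<sigma>\<^sup>2 / (2 * L) * C1 * (4 / ((exp 1)\<^sup>2 * x\<^sup>2))"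
      using square_mul_exp_neg_le[OF x, of "\<alpha> ^ t"] \<alpha> \<open>0 < L\<close>
      by (intro mult_left_mono) (auto simp: C1_def)
    finally show "c t * exp (- (\<Sum>s=t+1..T. q s)) \<le> \<sigma>\<^sup>2 / (2 * L) * C1 * (4 / ((exp 1)\<^sup>2 * x\<^sup>2))" .
  qed
  also have "(\<Sum>t=1..T. \<sigma>\<^sup>2 / (2 * L) * C1 * (4 / ((exp 1)\<^sup>2 * x\<^sup>2)))
      = C1 * (4 * \<kappa>\<^sup>2 / ((exp 1)\<^sup>2 * \<alpha>\<^sup>2)) / (2 * L) * (l\<^sup>2 * \<sigma>\<^sup>2 / (\<epsilon>\<^sup>2 * real T))"
    using T l \<alpha> assms(4-9) by (simp add: x_def power2_eq_square field_simps)
  finally have noise: "(\<Sum>t=1..T. c t * exp (- (\<Sum>s=t+1..T. q s)))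
      \<le> C1 * (4 * \<kappa>\<^sup>2 / ((exp 1)\<^sup>2 * \<alpha>\<^sup>2)) / (2 * L) * (l\<^sup>2 * \<sigma>\<^sup>2 / (\<epsilon>\<^sup>2 * real T))" .
  have "E (T + 1) \<le> exp (- (\<Sum>s=1..T. q s)) * E 1 + (\<Sum>t=1..T. c t * exp (- (\<Sum>s=t+1..T. q s)))"
    by (rule linear_recursion_exp_bound[OF nonneg]) (use rec in \<open>auto simp: q_def c_def\<close>)
  with initial noise show ?thesis
    unfolding x_def by linarith
qed

section \<open>Stochastic gradient ascent under a Lojasiewicz condition\<close>

locale sgd_lojasiewicz = prob_space M
  for M :: "'b measure" +
  fixes F :: "nat \<Rightarrow> 'b measure"
    and f :: "'a::euclidean_space \<Rightarrow> real" and grad :: "'a \<Rightarrow> 'a" and C :: "'a \<Rightarrow> real"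
    and \<theta> g :: "nat \<Rightarrow> 'b \<Rightarrow> 'a" and L \<sigma> :: real and \<eta> :: "nat \<Rightarrow> real"
  assumes filtration: "is_filtration M F"
    and bdd: "bdd_above (range f)" and f_borel: "f \<in> borel_measurable borel"
    and L_pos: "0 < L" and smooth: "L_smooth L f grad"
    and C_pos: "\<And>x. 0 < C x"
    and lojasiewicz: "\<And>x. C x * \<bar>Sup (range f) - f x\<bar> \<le> norm (grad x)"
    and adapted: "\<And>t. 1 \<le> t \<Longrightarrow> \<theta> t \<in> borel_measurable (F t)"
    and g_borel: "\<And>t. 1 \<le> t \<Longrightarrow> g t \<in> borel_measurable M"
    and noise: "\<And>t. 1 \<le> t \<Longrightarrow> integrable M (\<lambda>\<omega>. (norm (g t \<omega> - grad (\<theta> t \<omega>)))\<^sup>2)"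
    and unbiased: "\<And>t b. 1 \<le> t \<Longrightarrow> b \<in> Basis \<Longrightarrow>
      AE \<omega> in M. real_cond_exp M (F t) (\<lambda>\<omega>. g t \<omega> \<bullet> b) \<omega> = grad (\<theta> t \<omega>) \<bullet> b"
    and variance: "\<And>t. 1 \<le> t \<Longrightarrow>
      AE \<omega> in M. real_cond_exp M (F t) (\<lambda>\<omega>. (norm (g t \<omega> - grad (\<theta> t \<omega>)))\<^sup>2) \<omega> \<le> \<sigma>\<^sup>2"
    and update: "\<And>t \<omega>. 1 \<le> t \<Longrightarrow> \<theta> (t + 1) \<omega> = \<theta> t \<omega> + \<eta> t *\<^sub>R g t \<omega>"
    and stepsize: "\<And>t. 1 \<le> t \<Longrightarrow> 0 < \<eta> t \<and> L * \<eta> t \<le> 1"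
    and inverse_inf_C_sq_borel: "(\<lambda>\<omega>. inverse (ennreal (INF t\<in>{1..}. (C (\<theta> t \<omega>))\<^sup>2))) \<in> borel_measurable M"
    and inverse_inf_C_sq_finite: "(\<integral>\<^sup>+\<omega>. inverse (ennreal (INF t\<in>{1..}. (C (\<theta> t \<omega>))\<^sup>2)) \<partial>M) < \<infinity>"
begin

definition inf_C_sq :: "'b \<Rightarrow> real" where
  "inf_C_sq \<omega> = (INF t\<in>{1..}. (C (\<theta> t \<omega>))\<^sup>2)"

lemma sigma_finite_subalgebra_F: "sigma_finite_subalgebra M (F t)"
  using filtration finite_measure_axioms unfolding is_filtration_def
  by (intro finite_measure_subalgebra_is_sigma_finite)
    (simp add: finite_measure_subalgebra_def finite_measure_subalgebra_axioms_def)

lemma expected_gap_step: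
  assumes "1 \<le> t" and gap: "integrable M (\<lambda>\<omega>. Sup (range f) - f (\<theta> t \<omega>))"
  shows "integrable M (\<lambda>\<omega>. Sup (range f) - f (\<theta> (t + 1) \<omega>))"
    and "(\<integral>\<omega>. Sup (range f) - f (\<theta> (t + 1) \<omega>) \<partial>M)
      \<le> (\<integral>\<omega>. Sup (range f) - f (\<theta> t \<omega>) \<partial>M) - \<eta> t / 2 * (\<integral>\<omega>. (norm (grad (\<theta> t \<omega>)))\<^sup>2 \<partial>M)
        + L * (\<eta> t)\<^sup>2 / 2 * \<sigma>\<^sup>2"
proof -
  interpret S: sigma_finite_subalgebra M "F t"
    by (rule sigma_finite_subalgebra_F)
  note descent = S.expected_gap_descent[OF prob_space_axioms bdd f_borel L_pos smooth
      adapted[OF \<open>1 \<le> t\<close>] g_borel[OF \<open>1 \<le> t\<close>] unbiased[OF \<open>1 \<le> t\<close>] noise[OF \<open>1 \<le> t\<close>]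
      variance[OF \<open>1 \<le> t\<close>] stepsize[OF \<open>1 \<le> t\<close>, THEN conjunct1] stepsize[OF \<open>1 \<le> t\<close>, THEN conjunct2] gap]
  show "integrable M (\<lambda>\<omega>. Sup (range f) - f (\<theta> (t + 1) \<omega>))"
    using descent(1) unfolding update[OF \<open>1 \<le> t\<close>] .
  show "(\<integral>\<omega>. Sup (range f) - f (\<theta> (t + 1) \<omega>) \<partial>M)
      \<le> (\<integral>\<omega>. Sup (range f) - f (\<theta> t \<omega>) \<partial>M) - \<eta> t / 2 * (\<integral>\<omega>. (norm (grad (\<theta> t \<omega>)))\<^sup>2 \<partial>M)
        + L * (\<eta> t)\<^sup>2 / 2 * \<sigma>\<^sup>2"
    using descent(2) unfolding update[OF \<open>1 \<le> t\<close>] .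
qed

lemma integrable_gap:
  assumes "integrable M (\<lambda>\<omega>. Sup (range f) - f (\<theta> 1 \<omega>))" and "1 \<le> t"
  shows "integrable M (\<lambda>\<omega>. Sup (range f) - f (\<theta> t \<omega>))"
  using \<open>1 \<le> t\<close>
proof (induction t rule: dec_induct)
  case base
  then show ?case by (fact assms(1))
next
  case (step t)
  then show ?case
    using expected_gap_step(1)[of t] by simp
qed

lemma inf_C_sq_nonneg: "0 \<le> inf_C_sq \<omega>"
  unfolding inf_C_sq_def by (rule cINF_greatest) auto

lemma inf_C_sq_le: "1 \<le> t \<Longrightarrow> inf_C_sq \<omega> \<le> (C (\<theta> t \<omega>))\<^sup>2"
  unfolding inf_C_sq_def by (rule cINF_lower) (auto intro: bdd_belowI[of _ 0])

lemma AE_inf_C_sq_pos: "AE \<omega> in M. 0 < inf_C_sq \<omega> \<and> inverse (ennreal (inf_C_sq \<omega>)) = ennreal (1 / inf_C_sq \<omega>)"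
proof -
  have "AE \<omega> in M. inverse (ennreal (inf_C_sq \<omega>)) \<noteq> \<infinity>"
    using inverse_inf_C_sq_borel inverse_inf_C_sq_finite unfolding inf_C_sq_def[abs_def]
    by (intro nn_integral_PInf_AE) auto
  then show ?thesis
  proof (rule eventually_mono)
    fix \<omega> assume "inverse (ennreal (inf_C_sq \<omega>)) \<noteq> \<infinity>"
    then have "0 < inf_C_sq \<omega>"
      using inf_C_sq_nonneg[of \<omega>] by (cases "inf_C_sq \<omega> = 0") auto
    then show "0 < inf_C_sq \<omega> \<and> inverse (ennreal (inf_C_sq \<omega>)) = ennreal (1 / inf_C_sq \<omega>)"
      by (simp add: inverse_ennreal inverse_eq_divide)
  qed
qed

lemma borel_measurable_inverse_inf_C_sq: "(\<lambda>\<omega>. 1 / inf_C_sq \<omega>) \<in> borel_measurable M"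
proof -
  have "(\<lambda>\<omega>. 1 / inf_C_sq \<omega>) = (\<lambda>\<omega>. enn2real (inverse (ennreal (inf_C_sq \<omega>))))"
    using inf_C_sq_nonneg by (simp add: enn2real_inverse_ennreal)
  then show ?thesis
    using inverse_inf_C_sq_borel unfolding inf_C_sq_def[abs_def] by simp
qed

lemma integral_inverse_inf_C_sq:
  "(\<integral>\<omega>. 1 / inf_C_sq \<omega> \<partial>M) = enn2real (\<integral>\<^sup>+\<omega>. inverse (ennreal (INF t\<in>{1..}. (C (\<theta> t \<omega>))\<^sup>2)) \<partial>M)"
  unfolding inf_C_sq_def[symmetric]
  using AE_inf_C_sq_pos inf_C_sq_nonneg borel_measurable_inverse_inf_C_sq
  by (intro enn2real_nn_integral_eq_integral[symmetric]) (auto elim: eventually_mono)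

lemma integrable_inverse_inf_C_sq: "integrable M (\<lambda>\<omega>. 1 / inf_C_sq \<omega>)"
proof (rule integrableI_nonneg[OF borel_measurable_inverse_inf_C_sq])
  show "AE \<omega> in M. 0 \<le> 1 / inf_C_sq \<omega>"
    using inf_C_sq_nonneg by simp
  have "(\<integral>\<^sup>+\<omega>. ennreal (1 / inf_C_sq \<omega>) \<partial>M) = (\<integral>\<^sup>+\<omega>. inverse (ennreal (inf_C_sq \<omega>)) \<partial>M)"
    using AE_inf_C_sq_pos by (intro nn_integral_cong_AE) (auto elim: eventually_mono)
  then show "(\<integral>\<^sup>+\<omega>. ennreal (1 / inf_C_sq \<omega>) \<partial>M) < \<infinity>"
    using inverse_inf_C_sq_finite unfolding inf_C_sq_def by simp
qed

lemma integral_inverse_inf_C_sq_pos: "0 < (\<integral>\<omega>. 1 / inf_C_sq \<omega> \<partial>M)"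
proof -
  have "(\<integral>\<omega>. 1 / inf_C_sq \<omega> \<partial>M) \<noteq> 0"
  proof
    assume "(\<integral>\<omega>. 1 / inf_C_sq \<omega> \<partial>M) = 0"
    then have "AE \<omega> in M. 1 / inf_C_sq \<omega> = 0"
      using integrable_inverse_inf_C_sq inf_C_sq_nonneg by (subst (asm) integral_nonneg_eq_0_iff_AE) auto
    with AE_inf_C_sq_pos have "AE \<omega> in M. False"
      by eventually_elim simp
    then show False
      by simp
  qed
  moreover have "0 \<le> (\<integral>\<omega>. 1 / inf_C_sq \<omega> \<partial>M)"
    using inf_C_sq_nonneg by (simp add: integral_nonneg_AE)
  ultimately show ?thesis
    by simp
qed

lemma expected_gradient_lower_bound:
  assumes "1 \<le> t" and gap: "integrable M (\<lambda>\<omega>. Sup (range f) - f (\<theta> t \<omega>))"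
  shows "(\<integral>\<omega>. Sup (range f) - f (\<theta> t \<omega>) \<partial>M)\<^sup>2 / (\<integral>\<omega>. 1 / inf_C_sq \<omega> \<partial>M)
    \<le> (\<integral>\<omega>. (norm (grad (\<theta> t \<omega>)))\<^sup>2 \<partial>M)"
proof (rule integral_square_div_le_weighted[OF _ gap integrable_inverse_inf_C_sq _ integral_inverse_inf_C_sq_pos])
  have "\<theta> t \<in> borel_measurable M"
    using measurable_from_subalg adapted[OF \<open>1 \<le> t\<close>] filtration unfolding is_filtration_def by blast
  then show "integrable M (\<lambda>\<omega>. (norm (grad (\<theta> t \<omega>)))\<^sup>2)"
    using gap by (rule integrable_gradient_norm_sq[OF bdd L_pos smooth f_borel])
  show "AE \<omega> in M. 0 < inf_C_sq \<omega> \<and> inf_C_sq \<omega> * (Sup (range f) - f (\<theta> t \<omega>))\<^sup>2 \<le> (norm (grad (\<theta> t \<omega>)))\<^sup>2"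
    using AE_inf_C_sq_pos
  proof (rule eventually_mono)
    fix \<omega> assume "0 < inf_C_sq \<omega> \<and> inverse (ennreal (inf_C_sq \<omega>)) = ennreal (1 / inf_C_sq \<omega>)"
    moreover have "inf_C_sq \<omega> * (Sup (range f) - f (\<theta> t \<omega>))\<^sup>2 \<le> (C (\<theta> t \<omega>))\<^sup>2 * (Sup (range f) - f (\<theta> t \<omega>))\<^sup>2"
      using inf_C_sq_le[OF \<open>1 \<le> t\<close>] by (intro mult_right_mono) auto
    moreover have "(C (\<theta> t \<omega>) * \<bar>Sup (range f) - f (\<theta> t \<omega>)\<bar>)\<^sup>2 \<le> (norm (grad (\<theta> t \<omega>)))\<^sup>2"
      using lojasiewicz C_pos[of "\<theta> t \<omega>"] by (intro power_mono) auto
    ultimately show "0 < inf_C_sq \<omega> \<and> inf_C_sq \<omega> * (Sup (range f) - f (\<theta> t \<omega>))\<^sup>2 \<le> (norm (grad (\<theta> t \<omega>)))\<^sup>2"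
      by (simp add: power_mult_distrib)
  qed
qed

lemma expected_gap_recursion:
  fixes \<epsilon> :: real
  assumes "0 < (\<integral>\<omega>. Sup (range f) - f (\<theta> 1 \<omega>) \<partial>M)" and "1 \<le> t"
    and "0 \<le> \<epsilon>" and "\<epsilon> \<le> (\<integral>\<omega>. Sup (range f) - f (\<theta> t \<omega>) \<partial>M)"
  shows "(\<integral>\<omega>. Sup (range f) - f (\<theta> (t + 1) \<omega>) \<partial>M)
    \<le> (1 - \<eta> t * \<epsilon> / (2 * (\<integral>\<omega>. 1 / inf_C_sq \<omega> \<partial>M))) * (\<integral>\<omega>. Sup (range f) - f (\<theta> t \<omega>) \<partial>M)
      + L * (\<eta> t)\<^sup>2 / 2 * \<sigma>\<^sup>2"
proof -
  define E where "E = (\<integral>\<omega>. Sup (range f) - f (\<theta> t \<omega>) \<partial>M)"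
  define K where "K = (\<integral>\<omega>. 1 / inf_C_sq \<omega> \<partial>M)"
  define A where "A = (\<integral>\<omega>. (norm (grad (\<theta> t \<omega>)))\<^sup>2 \<partial>M)"
  have "integrable M (\<lambda>\<omega>. Sup (range f) - f (\<theta> 1 \<omega>))"
    using assms(1) not_integrable_integral_eq by force
  then have gap: "integrable M (\<lambda>\<omega>. Sup (range f) - f (\<theta> t \<omega>))"
    using \<open>1 \<le> t\<close> by (rule integrable_gap)
  have "0 < K"
    unfolding K_def by (rule integral_inverse_inf_C_sq_pos)
  have "\<epsilon> * E / K \<le> E\<^sup>2 / K"
    using assms(3,4) \<open>0 < K\<close> unfolding E_def by (intro divide_right_mono) (auto simp: power2_eq_square mult_right_mono)
  also have "\<dots> \<le> A"
    unfolding E_def K_def A_def by (rule expected_gradient_lower_bound[OF \<open>1 \<le> t\<close> gap])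
  finally have "\<eta> t / 2 * (\<epsilon> * E / K) \<le> \<eta> t / 2 * A"
    using stepsize[OF \<open>1 \<le> t\<close>] by (intro mult_left_mono) auto
  moreover have "(\<integral>\<omega>. Sup (range f) - f (\<theta> (t + 1) \<omega>) \<partial>M) \<le> E - \<eta> t / 2 * A + L * (\<eta> t)\<^sup>2 / 2 * \<sigma>\<^sup>2"
    unfolding E_def A_def by (rule expected_gap_step(2)[OF \<open>1 \<le> t\<close> gap])
  ultimately show ?thesis
    unfolding E_def[symmetric] K_def[symmetric] by (simp add: algebra_simps)
qed


lemma expected_gap_exponential_stepsize_bound:
  fixes \<beta> \<epsilon> :: real and T :: nat
  defines "\<alpha> \<equiv> (\<beta> / real T) powr (1 / real T)"
    and "\<mu> \<equiv> 1 / (\<integral>\<omega>. 1 / inf_C_sq \<omega> \<partial>M)"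
  defines "\<kappa> \<equiv> 2 * L / \<mu>"
  assumes exponential: "\<And>t. \<eta> t = 1 / L * \<alpha> ^ t"
    and beta: "1 \<le> \<beta>" "\<beta> < real T" and eps: "0 < \<epsilon>" "\<epsilon> < 1"
    and gaps: "\<forall>t\<in>{1..T}. \<epsilon> < (\<integral>\<omega>. Sup (range f) - f (\<theta> t \<omega>) \<partial>M)"
  shows "(\<integral>\<omega>. Sup (range f) - f (\<theta> (T + 1) \<omega>) \<partial>M)
    \<le> (\<integral>\<omega>. Sup (range f) - f (\<theta> 1 \<omega>) \<partial>M) * exp (2 * \<beta> / (\<kappa> * ln (real T / \<beta>)))
        * exp (- (\<alpha> * \<epsilon> * real T / (\<kappa> * ln (real T / \<beta>))))
      + exp (2 * \<beta> / (\<kappa> * ln (real T / \<beta>))) * (4 * \<kappa>\<^sup>2 / ((exp 1)\<^sup>2 * \<alpha>\<^sup>2)) / (2 * L)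
        * ((ln (real T / \<beta>))\<^sup>2 * \<sigma>\<^sup>2 / (\<epsilon>\<^sup>2 * real T))"
proof (rule exponential_stepsize_recursion_bound[OF beta eps _ L_pos, folded \<alpha>_def])
  define K where "K = (\<integral>\<omega>. 1 / inf_C_sq \<omega> \<partial>M)"
  have "0 < K"
    unfolding K_def by (rule integral_inverse_inf_C_sq_pos)
  then show "0 < \<kappa>"
    using L_pos by (simp add: \<kappa>_def \<mu>_def K_def[symmetric])
  show "0 \<le> (\<integral>\<omega>. Sup (range f) - f (\<theta> t \<omega>) \<partial>M)" for t
    using bdd by (intro integral_nonneg_AE AE_I2) (simp add: cSUP_upper)
  have first_gap: "0 < (\<integral>\<omega>. Sup (range f) - f (\<theta> 1 \<omega>) \<partial>M)"
    using gaps eps beta by force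
  show "(\<integral>\<omega>. Sup (range f) - f (\<theta> (t + 1) \<omega>) \<partial>M)
      \<le> (1 - \<alpha> ^ t * \<epsilon> / \<kappa>) * (\<integral>\<omega>. Sup (range f) - f (\<theta> t \<omega>) \<partial>M) + \<alpha> ^ (2 * t) * \<sigma>\<^sup>2 / (2 * L)"
    if "1 \<le> t" and "t \<le> T" for t
  proof -
    have "(\<integral>\<omega>. Sup (range f) - f (\<theta> (t + 1) \<omega>) \<partial>M)
        \<le> (1 - \<eta> t * \<epsilon> / (2 * K)) * (\<integral>\<omega>. Sup (range f) - f (\<theta> t \<omega>) \<partial>M) + L * (\<eta> t)\<^sup>2 / 2 * \<sigma>\<^sup>2"
      unfolding K_def
      by (rule expected_gap_recursion) (use first_gap gaps that eps in \<open>auto simp: less_imp_le\<close>)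
    also have "\<dots> = (1 - \<alpha> ^ t * \<epsilon> / \<kappa>) * (\<integral>\<omega>. Sup (range f) - f (\<theta> t \<omega>) \<partial>M) + \<alpha> ^ (2 * t) * \<sigma>\<^sup>2 / (2 * L)"
      using L_pos unfolding exponential \<kappa>_def \<mu>_def K_def[symmetric]
      by (simp add: power_mult power_mult_distrib power2_eq_square field_simps)
    finally show ?thesis .
  qed
qed

end

theorem theorem3:
  fixes M :: "'b measure" and F :: "nat \<Rightarrow> 'b measure"
    and f :: "'a::euclidean_space \<Rightarrow> real" and grad :: "'a \<Rightarrow> 'a"
    and C :: "'a \<Rightarrow> real"
    and \<theta> :: "nat \<Rightarrow> 'b \<Rightarrow> 'a" and g :: "nat \<Rightarrow> 'b \<Rightarrow> 'a"
    and L \<sigma> \<epsilon> \<beta> :: real and T :: nat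
  assumes prob: "prob_space M"
    and filt: "is_filtration M F"
    and bdd: "bdd_above (range f)"
    and grad: "\<And>x. (f has_derivative (\<lambda>h. grad x \<bullet> h)) (at x)"
    and Lpos: "L > 0"
    and smooth: "L_smooth L f grad"
    and Cpos: "\<And>x. C x > 0"
    and loj: "\<And>x. norm (grad x) \<ge> C x * \<bar>Sup (range f) - f x\<bar>"
    and eps: "0 < \<epsilon>" "\<epsilon> < 1"
    and beta: "\<beta> \<ge> 1" "\<beta> < real T"
    and adapted: "\<And>t. t \<ge> 1 \<Longrightarrow> \<theta> t \<in> borel_measurable (F t)"
    and g_meas: "\<And>t. t \<ge> 1 \<Longrightarrow> g t \<in> borel_measurable M"
    and g_sq_int: "\<And>t. t \<ge> 1 \<Longrightarrow> integrable M (\<lambda>\<omega>. (norm (g t \<omega> - grad (\<theta> t \<omega>)))\<^sup>2)"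
    and unbiased: "\<And>t b. t \<ge> 1 \<Longrightarrow> b \<in> Basis \<Longrightarrow>
        AE \<omega> in M. real_cond_exp M (F t) (\<lambda>\<omega>. g t \<omega> \<bullet> b) \<omega> = grad (\<theta> t \<omega>) \<bullet> b"
    and variance: "\<And>t. t \<ge> 1 \<Longrightarrow>
        AE \<omega> in M. real_cond_exp M (F t) (\<lambda>\<omega>. (norm (g t \<omega> - grad (\<theta> t \<omega>)))\<^sup>2) \<omega> \<le> \<sigma>\<^sup>2"
    and update: "\<And>t \<omega>. t \<ge> 1 \<Longrightarrow>
        \<theta> (t + 1) \<omega> = \<theta> t \<omega> + ((1 / L) * ((\<beta> / real T) powr (1 / real T)) ^ t) *\<^sub>R g t \<omega>"
    and mu_meas: "(\<lambda>\<omega>. inverse (ennreal (INF t\<in>{1..}. (C (\<theta> t \<omega>))\<^sup>2))) \<in> borel_measurable M"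
    and mu_pos: "(\<integral>\<^sup>+\<omega>. inverse (ennreal (INF t\<in>{1..}. (C (\<theta> t \<omega>))\<^sup>2)) \<partial>M) < \<infinity>"
  shows "let fstar = Sup (range f);
             E = (\<lambda>t. \<integral>\<omega>. fstar - f (\<theta> t \<omega>) \<partial>M);
             \<alpha> = (\<beta> / real T) powr (1 / real T);
             \<mu> = 1 / enn2real (\<integral>\<^sup>+\<omega>. inverse (ennreal (INF t\<in>{1..}. (C (\<theta> t \<omega>))\<^sup>2)) \<partial>M);
             \<kappa> = 2 * L / \<mu>;
             C1 = exp (2 * \<beta> / (\<kappa> * ln (real T / \<beta>)));
             C2 = 4 * \<kappa>\<^sup>2 / ((exp 1)\<^sup>2 * \<alpha>\<^sup>2)
         in ((\<forall>t\<in>{1..T}. E t > \<epsilon>) \<longrightarrow>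
               E (T + 1) \<le> E 1 * C1 * exp (- (\<alpha> * \<epsilon> * real T / (\<kappa> * ln (real T / \<beta>))))
                 + C1 * C2 / (2 * L) * ((ln (real T / \<beta>))\<^sup>2 * \<sigma>\<^sup>2 / (\<epsilon>\<^sup>2 * real T)))
          \<and> (\<not> (\<forall>t\<in>{1..T}. E t > \<epsilon>) \<longrightarrow> Min (E ` {1..T}) \<le> \<epsilon>)"
proof -
  define \<alpha> where "\<alpha> = (\<beta> / real T) powr (1 / real T)"
  note \<alpha> = stepsize_decay_factor[OF beta, folded \<alpha>_def]
  have f_borel: "f \<in> borel_measurable borel"
    using grad by (intro borel_measurable_continuous_onI continuous_at_imp_continuous_on)
      (blast intro: has_derivative_continuous)
  interpret sgd_lojasiewicz M F f grad C \<theta> g L \<sigma> "\<lambda>t. 1 / L * \<alpha> ^ t"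
  proof (intro sgd_lojasiewicz.intro[OF prob] sgd_lojasiewicz_axioms.intro)
    show "\<theta> (t + 1) \<omega> = \<theta> t \<omega> + (1 / L * \<alpha> ^ t) *\<^sub>R g t \<omega>" if "1 \<le> t" for t \<omega>
      using update[OF that] by (simp add: \<alpha>_def)
    show "0 < 1 / L * \<alpha> ^ t \<and> L * (1 / L * \<alpha> ^ t) \<le> 1" for t
      using Lpos \<alpha> by (simp add: power_le_one)
  qed (fact filt bdd f_borel Lpos smooth Cpos loj adapted g_meas g_sq_int unbiased variance mu_meas mu_pos)+
  show ?thesis
    unfolding Let_def integral_inverse_inf_C_sq[symmetric] \<alpha>_def[symmetric]
    using expected_gap_exponential_stepsize_bound[OF _ beta eps, folded \<alpha>_def, OF refl]
    by (auto simp: Min_le_iff not_less) force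
qed

end
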